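(* Let $s = s[1..n]$ be a string over a finite alphabet. The LZ77 parse of $s$ (as defined in the context) can be computed by a deterministic algorithm that has read-only random access to $s$, writes its output to a write-only output, and uses $O(\log n)$ bits of workspace.
   Context: The LZ77 parse considered here is the greedy, non-self-referencing variant. It partitions $s$ into consecutive phrases, left to right. The first phrase is the single character $s[1]$. Let $t$ be the position just after the already-parsed prefix $s[1..t-1]$, with $t \le n$. For each $1 \le i < t$, let $L_i$ be the length of the longest common prefix of $s[i..t-1]$ and $s[t..n]$; let $L = \max_i L_i$, and let $i^*$ be the minimal $i$ attaining $L$. If $L \le 1$, the next phrase is the single character $s[t]$, output as that character. Otherwise the next phrase is $s[t..t+L-1]$, output as the pair $(i^*, L)$. Each phrase is thus either a single character or a copy of a substring of the prefix already parsed. *)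

theory Defs
  imports Main
begin

text \<open>Positions are 1-indexed as in the paper: s[k] is s ! (k - 1).\<close>

datatype 'a phrase = Lit 'a | Copy nat nat  \<comment> \<open>Copy i L = the pair (i, L)\<close>

fun lcp :: "'a list \<Rightarrow> 'a list \<Rightarrow> nat" where
  "lcp (x # xs) (y # ys) = (if x = y then Suc (lcp xs ys) else 0)"
| "lcp _ _ = 0"

text \<open>L_i: longest common prefix of s[i..t-1] and s[t..n].\<close>
definition Lval :: "'a list \<Rightarrow> nat \<Rightarrow> nat \<Rightarrow> nat" where
  "Lval s t i = lcp (take (t - i) (drop (i - 1) s)) (drop (t - 1) s)"

definition maxL :: "'a list \<Rightarrow> nat \<Rightarrow> nat" where
  "maxL s t = Max (Lval s t ` {1..<t})"

definition argL :: "'a list \<Rightarrow> nat \<Rightarrow> nat" where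
  "argL s t = (LEAST i. 1 \<le> i \<and> i < t \<and> Lval s t i = maxL s t)"

function lz_from :: "'a list \<Rightarrow> nat \<Rightarrow> 'a phrase list" where
  "lz_from s t =
     (if t = 0 \<or> length s < t then []
      else if t = 1 then Lit (s ! 0) # lz_from s 2
      else if maxL s t \<le> 1 then Lit (s ! (t - 1)) # lz_from s (Suc t)
      else Copy (argL s t) (maxL s t) # lz_from s (t + maxL s t))"
  by pat_completeness auto
termination
  by (relation "measure (\<lambda>(s, t). Suc (length s) - t)") auto

definition lz77 :: "'a list \<Rightarrow> 'a phrase list" where
  "lz77 s = lz_from s 1"

text \<open>Natural-number registers R (the workspace),
  a constant number of symbol registers C (each holding one alphabet symbol, or none),
  read-only random access to the input s (1-indexed), and a write-only output stream
  of phrases (the machine can append to it but never read it).\<close>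

datatype instr =
    Inc nat
  | Dec nat                 \<comment> \<open>R r := R r - 1 (truncated)\<close>
  | Assign nat nat
  | Add nat nat nat
  | Sub nat nat nat         \<comment> \<open>R d := R a - R b (truncated)\<close>
  | Jz nat nat
  | Jlt nat nat nat
  | Jmp nat
  | Load nat nat
  | JeqC nat nat nat
  | OutLit nat
  | OutCopy nat nat

record 'a config =
  pc :: nat
  regs :: "nat \<Rightarrow> nat"
  cregs :: "nat \<Rightarrow> 'a option"
  out :: "'a phrase list"

definition init :: "'a list \<Rightarrow> 'a config" where
  "init s = \<lparr>pc = 0, regs = (\<lambda>_. 0)(0 := length s), cregs = (\<lambda>_. None), out = []\<rparr>"

fun exec :: "instr \<Rightarrow> 'a list \<Rightarrow> 'a config \<Rightarrow> 'a config" where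
  "exec (Inc r) s c = c\<lparr>pc := Suc (pc c), regs := (regs c)(r := Suc (regs c r))\<rparr>"
| "exec (Dec r) s c = c\<lparr>pc := Suc (pc c), regs := (regs c)(r := regs c r - 1)\<rparr>"
| "exec (Assign d a) s c = c\<lparr>pc := Suc (pc c), regs := (regs c)(d := regs c a)\<rparr>"
| "exec (Add d a b) s c = c\<lparr>pc := Suc (pc c), regs := (regs c)(d := regs c a + regs c b)\<rparr>"
| "exec (Sub d a b) s c = c\<lparr>pc := Suc (pc c), regs := (regs c)(d := regs c a - regs c b)\<rparr>"
| "exec (Jz r t) s c = c\<lparr>pc := (if regs c r = 0 then t else Suc (pc c))\<rparr>"
| "exec (Jlt a b t) s c = c\<lparr>pc := (if regs c a < regs c b then t else Suc (pc c))\<rparr>"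
| "exec (Jmp t) s c = c\<lparr>pc := t\<rparr>"
| "exec (Load k r) s c = c\<lparr>pc := Suc (pc c),
     cregs := (cregs c)(k := (if 1 \<le> regs c r \<and> regs c r \<le> length s
                              then Some (s ! (regs c r - 1)) else None))\<rparr>"
| "exec (JeqC k1 k2 t) s c = c\<lparr>pc := (if cregs c k1 = cregs c k2 then t else Suc (pc c))\<rparr>"
| "exec (OutLit k) s c = c\<lparr>pc := Suc (pc c), out := out c @ [Lit (the (cregs c k))]\<rparr>"
| "exec (OutCopy a b) s c = c\<lparr>pc := Suc (pc c), out := out c @ [Copy (regs c a) (regs c b)]\<rparr>"

definition halted :: "instr list \<Rightarrow> 'a config \<Rightarrow> bool" where
  "halted P c \<longleftrightarrow> length P \<le> pc c"

definition step :: "instr list \<Rightarrow> 'a list \<Rightarrow> 'a config \<Rightarrow> 'a config" where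
  "step P s c = (if halted P c then c else exec (P ! pc c) s c)"

definition run :: "instr list \<Rightarrow> 'a list \<Rightarrow> nat \<Rightarrow> 'a config" where
  "run P s k = (step P s ^^ k) (init s)"

fun nregs_i :: "instr \<Rightarrow> nat" where
  "nregs_i (Inc r) = Suc r"
| "nregs_i (Dec r) = Suc r"
| "nregs_i (Assign d a) = Suc (max d a)"
| "nregs_i (Add d a b) = Suc (max d (max a b))"
| "nregs_i (Sub d a b) = Suc (max d (max a b))"
| "nregs_i (Jz r t) = Suc r"
| "nregs_i (Jlt a b t) = Suc (max a b)"
| "nregs_i (Jmp t) = 0"
| "nregs_i (Load k r) = Suc r"
| "nregs_i (JeqC k1 k2 t) = 0"
| "nregs_i (OutLit k) = 0"
| "nregs_i (OutCopy a b) = Suc (max a b)"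

fun ncregs_i :: "instr \<Rightarrow> nat" where
  "ncregs_i (Load k r) = Suc k"
| "ncregs_i (JeqC k1 k2 t) = Suc (max k1 k2)"
| "ncregs_i (OutLit k) = Suc k"
| "ncregs_i _ = 0"

definition nregs :: "instr list \<Rightarrow> nat" where
  "nregs P = Max (insert 1 (nregs_i ` set P))"

definition ncregs :: "instr list \<Rightarrow> nat" where
  "ncregs P = Max (insert 0 (ncregs_i ` set P))"

fun bitlen :: "nat \<Rightarrow> nat" where
  "bitlen v = (if v < 2 then 1 else Suc (bitlen (v div 2)))"

definition space :: "instr list \<Rightarrow> ('a::finite) config \<Rightarrow> nat" where
  "space P c = bitlen (length P) + (\<Sum>r<nregs P. bitlen (regs c r))
              + ncregs P * bitlen (card (UNIV :: 'a set))"

end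

theory Submission
  imports Defs
begin

(* The parse is computed by an explicit register program lz_prog (38 instructions) that
   follows the definition of the greedy parse literally.  For the current position t it
   runs through all candidate sources i < t, computes L_i by comparing symbols one at a
   time, and remembers the first i at which the running maximum strictly increases; this
   is the leftmost i attaining max L_i.  It then emits a literal or a copy and advances t.
   The program uses eleven number registers and two symbol registers, and every number
   register always holds a value at most n + 1; this gives O(log n) bits of workspace. *)

declare bitlen.simps [simp del] lz_from.simps [simp del]


section \<open>Longest common prefixes and the greedy choice\<close>

lemma lcp_le_length1: "lcp xs ys \<le> length xs"
  by (induction xs ys rule: lcp.induct) auto

lemma lcp_le_length2: "lcp xs ys \<le> length ys"
  by (induction xs ys rule: lcp.induct) auto

lemma lcp_extend:
  assumes "l \<le> lcp xs ys" "l < length xs" "l < length ys"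
  shows "l < lcp xs ys \<longleftrightarrow> xs ! l = ys ! l"
  using assms
proof (induction xs ys arbitrary: l rule: lcp.induct)
  case (1 x xs y ys)
  then show ?case by (cases l) (auto split: if_splits)
qed auto

text \<open>The match from source i cannot reach into position t (no self-reference) ...\<close>
lemma Lval_le_gap: "Lval s t i \<le> t - i"
  unfolding Lval_def using lcp_le_length1 by (metis length_take min.bounded_iff)

lemma Lval_le_suffix: "Lval s t i \<le> length s + 1 - t"
proof -
  have "Lval s t i \<le> length (drop (t - 1) s)" unfolding Lval_def by (rule lcp_le_length2)
  then show ?thesis by simp
qed

text \<open>The symbol comparison performed by the program, in 1-indexed positions.\<close>
lemma Lval_extend:
  assumes "l \<le> Lval s t i" "1 \<le> i" "i + l < t" "t + l \<le> length s"
  shows "l < Lval s t i \<longleftrightarrow> s ! (i + l - 1) = s ! (t + l - 1)"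
  using assms unfolding Lval_def
  by (subst lcp_extend) (auto simp: algebra_simps)

definition best_before :: "'a list \<Rightarrow> nat \<Rightarrow> nat \<Rightarrow> nat" where
  "best_before s t i = Max (insert 0 (Lval s t ` {1..<i}))"

text \<open>j is the leftmost candidate below i attaining the positive value b; this is the
  invariant relating the register holding the source to the one holding the length.\<close>
definition leftmost_best :: "'a list \<Rightarrow> nat \<Rightarrow> nat \<Rightarrow> nat \<Rightarrow> nat \<Rightarrow> bool" where
  "leftmost_best s t i b j \<longleftrightarrow>
     (0 < b \<longrightarrow> 1 \<le> j \<and> j < i \<and> Lval s t j = b \<and> (\<forall>k. 1 \<le> k \<longrightarrow> k < j \<longrightarrow> Lval s t k < b))"

lemma best_before_1: "best_before s t (Suc 0) = 0"
  by (simp add: best_before_def)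

lemma best_before_Suc:
  assumes "1 \<le> i"
  shows "best_before s t (Suc i) = max (best_before s t i) (Lval s t i)"
proof -
  have "Lval s t ` {1..<Suc i} = insert (Lval s t i) (Lval s t ` {1..<i})"
    using assms by (simp add: atLeastLessThanSuc)
  then have "best_before s t (Suc i) = Max (insert (Lval s t i) (insert 0 (Lval s t ` {1..<i})))"
    unfolding best_before_def by (simp add: insert_commute)
  also have "\<dots> = max (Lval s t i) (best_before s t i)"
    unfolding best_before_def by (rule Max_insert) auto
  finally show ?thesis by (simp add: max.commute)
qed

lemma best_before_ge: "1 \<le> k \<Longrightarrow> k < i \<Longrightarrow> Lval s t k \<le> best_before s t i"
  unfolding best_before_def by (rule Max_ge) auto

lemma best_before_maxL: "2 \<le> t \<Longrightarrow> best_before s t t = maxL s t"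
  unfolding best_before_def maxL_def by (subst Max_insert) auto

lemma maxL_le_suffix: "2 \<le> t \<Longrightarrow> maxL s t \<le> length s + 1 - t"
  unfolding maxL_def using Lval_le_suffix by (intro Max.boundedI) auto

lemma leftmost_best_0: "leftmost_best s t i 0 j"
  by (simp add: leftmost_best_def)

text \<open>A strict improvement makes the current candidate the new leftmost witness ...\<close>
lemma leftmost_best_new:
  assumes "1 \<le> i" "best_before s t i < Lval s t i"
  shows "leftmost_best s t (Suc i) (Lval s t i) i"
  using assms best_before_ge[of _ i s t] unfolding leftmost_best_def
  by (meson order_le_less_trans lessI)

text \<open>... while otherwise (in particular on ties) the old witness is kept.\<close>
lemma leftmost_best_keep: "leftmost_best s t i b j \<Longrightarrow> leftmost_best s t (Suc i) b j"
  unfolding leftmost_best_def by auto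

lemma argL_leftmost:
  assumes "leftmost_best s t t (maxL s t) j" "0 < maxL s t"
  shows "argL s t = j"
  unfolding argL_def
proof (rule Least_equality)
  show "1 \<le> j \<and> j < t \<and> Lval s t j = maxL s t"
    using assms unfolding leftmost_best_def by simp
next
  fix k assume "1 \<le> k \<and> k < t \<and> Lval s t k = maxL s t"
  then show "j \<le> k"
    using assms unfolding leftmost_best_def by (metis not_le order_less_irrefl)
qed

lemma lz_from_end: "length s < t \<Longrightarrow> lz_from s t = []"
  by (subst lz_from.simps) simp

lemma lz_from_first: "s \<noteq> [] \<Longrightarrow> lz_from s 1 = Lit (s ! 0) # lz_from s 2"
  by (subst lz_from.simps) (cases s, auto)

lemma lz_from_lit: "2 \<le> t \<Longrightarrow> t \<le> length s \<Longrightarrow> maxL s t \<le> 1 \<Longrightarrow>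
    lz_from s t = Lit (s ! (t - 1)) # lz_from s (Suc t)"
  by (subst lz_from.simps) simp

lemma lz_from_copy: "2 \<le> t \<Longrightarrow> t \<le> length s \<Longrightarrow> 1 < maxL s t \<Longrightarrow>
    lz_from s t = Copy (argL s t) (maxL s t) # lz_from s (t + maxL s t)"
  by (subst lz_from.simps) simp


section \<open>Space: registers bounded by n + 1 cost O(log n) bits\<close>

lemma bitlen_ge_1: "1 \<le> bitlen v"
  by (subst bitlen.simps) simp

lemma bitlen_mono: "a \<le> b \<Longrightarrow> bitlen a \<le> bitlen b"
proof (induction b arbitrary: a rule: less_induct)
  case (less b)
  show ?case
  proof (cases "a < 2")
    case True
    then show ?thesis using bitlen_ge_1[of b] by (simp add: bitlen.simps)
  next
    case False
    then have "bitlen (a div 2) \<le> bitlen (b div 2)"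
      using less by (simp add: div_le_mono)
    then show ?thesis using False less.prems by (simp add: bitlen.simps[of a] bitlen.simps[of b])
  qed
qed

lemma bitlen_Suc_le: "bitlen (Suc v) \<le> 2 * bitlen v"
proof (cases "v = 0")
  case True
  then show ?thesis by (simp add: bitlen.simps)
next
  case False
  have "bitlen (Suc v) \<le> bitlen (2 * v)" using False by (intro bitlen_mono) simp
  also have "\<dots> = Suc (bitlen v)" using False by (subst bitlen.simps) simp
  also have "\<dots> \<le> 2 * bitlen v" using bitlen_ge_1[of v] by simp
  finally show ?thesis .
qed

lemma space_log_bound:
  fixes c :: "('a::finite) config"
  assumes "\<forall>r<nregs P. regs c r \<le> Suc n"
  shows "space P c \<le> (bitlen (length P) + 2 * nregs P + ncregs P * bitlen (card (UNIV :: 'a set)))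
                       * bitlen n"
proof -
  have "bitlen (regs c r) \<le> 2 * bitlen n" if "r < nregs P" for r
    using bitlen_mono[of "regs c r" "Suc n"] bitlen_Suc_le[of n] assms that by simp
  then have "(\<Sum>r<nregs P. bitlen (regs c r)) \<le> (\<Sum>r<nregs P. 2 * bitlen n)"
    by (intro sum_mono) simp
  then show ?thesis
    using bitlen_ge_1[of n] unfolding space_def by (simp add: algebra_simps add_mono)
qed


section \<open>A reachability calculus for register programs\<close>

definition reaches ::
    "instr list \<Rightarrow> 'a list \<Rightarrow> ('a config \<Rightarrow> bool) \<Rightarrow> 'a config \<Rightarrow> ('a config \<Rightarrow> bool) \<Rightarrow> bool" where
  "reaches P s I c Q \<longleftrightarrow> (\<exists>k. Q ((step P s ^^ k) c) \<and> (\<forall>j\<le>k. I ((step P s ^^ j) c)))"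

lemma reaches_done: "I c \<Longrightarrow> Q c \<Longrightarrow> reaches P s I c Q"
  unfolding reaches_def by (rule exI[of _ 0]) simp

lemma reaches_step:
  assumes "I c" "pc c < length P" "reaches P s I (exec (P ! pc c) s c) Q"
  shows "reaches P s I c Q"
proof -
  have next_conf: "step P s c = exec (P ! pc c) s c"
    using assms(2) by (simp add: step_def halted_def)
  obtain k where k: "Q ((step P s ^^ k) (step P s c))" "\<forall>j\<le>k. I ((step P s ^^ j) (step P s c))"
    using assms(3) unfolding reaches_def next_conf by blast
  have "I ((step P s ^^ j) c)" if "j \<le> Suc k" for j
    using that k(2) assms(1) by (cases j) (simp_all add: funpow_Suc_right del: funpow.simps)
  then show ?thesis
    using k(1) unfolding reaches_def
    by (intro exI[of _ "Suc k"]) (simp add: funpow_Suc_right del: funpow.simps)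
qed

lemma reaches_trans:
  assumes "reaches P s I c R" "\<And>c'. R c' \<Longrightarrow> I c' \<Longrightarrow> reaches P s I c' Q"
  shows "reaches P s I c Q"
proof -
  obtain k1 where k1: "R ((step P s ^^ k1) c)" "\<forall>j\<le>k1. I ((step P s ^^ j) c)"
    using assms(1) unfolding reaches_def by blast
  then obtain k2 where k2: "Q ((step P s ^^ k2) ((step P s ^^ k1) c))"
      "\<forall>j\<le>k2. I ((step P s ^^ j) ((step P s ^^ k1) c))"
    using assms(2) unfolding reaches_def by blast
  have "I ((step P s ^^ j) c)" if "j \<le> k2 + k1" for j
  proof (cases "j \<le> k1")
    case False
    then have "(step P s ^^ j) c = (step P s ^^ (j - k1)) ((step P s ^^ k1) c)"
      by (metis funpow_add comp_apply le_add_diff_inverse2 nle_le)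
    then show ?thesis using k2(2) that False by simp
  qed (use k1 in simp)
  then show ?thesis
    using k2(1) unfolding reaches_def by (intro exI[of _ "k2 + k1"]) (simp add: funpow_add)
qed

lemma reaches_mono: "reaches P s I c R \<Longrightarrow> (\<And>c'. R c' \<Longrightarrow> Q c') \<Longrightarrow> reaches P s I c Q"
  unfolding reaches_def by blast

lemma reaches_run:
  assumes "reaches P s I (init s) Q"
  obtains T where "Q (run P s T)" "\<forall>k\<le>T. I (run P s k)"
  using assms unfolding reaches_def run_def by blast


text \<open>Register use: 0 = n, 1 = t (current position), 2 = i (candidate source), 3 = l (length
  of the current match), 4 and 5 = best length and its source, 6 = i + l, 7 = t + l,
  9 and 10 = the constants 1 and 0.  Layout:
  0--1 initialisation; 2--7 outer loop head, halting test and the first phrase;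
  8--10 start of the scan over i; 11--19 scan loop head and emission of the phrase;
  20--31 the comparison loop computing L_i (head 21); 32--37 update of the best
  candidate and increment of i.\<close>
definition lz_prog :: "instr list" where
  "lz_prog =
    [Inc 1, Inc 9,
     Jlt 0 1 38, Jlt 9 1 8, Load 0 1, OutLit 0, Inc 1, Jmp 2,
     Assign 4 10, Assign 5 10, Assign 2 9,
     Jlt 2 1 20, Jlt 9 4 17, Load 0 1, OutLit 0, Inc 1, Jmp 2,
     OutCopy 5 4, Add 1 1 4, Jmp 2,
     Assign 3 10,
     Add 6 2 3, Jlt 6 1 24, Jmp 32, Add 7 1 3, Jlt 0 7 32, Load 0 6, Load 1 7, JeqC 0 1 30, Jmp 32,
     Inc 3, Jmp 21,
     Jlt 4 3 35, Inc 2, Jmp 11, Assign 4 3, Assign 5 2, Jmp 33]"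

lemma length_lz_prog: "length lz_prog = 38"
  by (simp add: lz_prog_def)

text \<open>Instruction fetch for a concrete program counter, without unfolding lz_prog in goals.\<close>
lemmas lz_prog_nth = arg_cong[where f = "\<lambda>P. P ! k" for k, OF lz_prog_def]

definition regs_bounded :: "'a list \<Rightarrow> (nat \<Rightarrow> nat) \<Rightarrow> bool" where
  "regs_bounded s R \<longleftrightarrow> (\<forall>r<nregs lz_prog. R r \<le> Suc (length s))"

lemma regs_bounded_upd [simp]:
  "regs_bounded s R \<Longrightarrow> v \<le> Suc (length s) \<Longrightarrow> regs_bounded s (R(r := v))"
  unfolding regs_bounded_def by simp

lemma regs_bounded_init: "regs_bounded s (regs (init s))"
  by (simp add: regs_bounded_def init_def)

abbreviation lz_reaches :: "'a list \<Rightarrow> 'a config \<Rightarrow> ('a config \<Rightarrow> bool) \<Rightarrow> bool" where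
  "lz_reaches s \<equiv> reaches lz_prog s (\<lambda>c. regs_bounded s (regs c))"

text \<open>Program points at which the loop invariants are stated.\<close>
definition loop_heads :: "nat set" where
  "loop_heads = {2, 11, 21, 32}"

text \<open>Symbolic execution of a single instruction.  The second rule only fires away from
  the loop heads, so iterating it runs exactly through a straight-line piece of code.\<close>
lemma lz_exec_step:
  "pc c < 38 \<and> regs_bounded s (regs c) \<and> lz_reaches s (exec (lz_prog ! pc c) s c) Q \<Longrightarrow>
    lz_reaches s c Q"
  by (rule reaches_step) (simp_all add: length_lz_prog)

lemma lz_straight_step:
  "pc c \<in> {..<38} - loop_heads \<Longrightarrow>
    regs_bounded s (regs c) \<and> lz_reaches s (exec (lz_prog ! pc c) s c) Q \<Longrightarrow> lz_reaches s c Q"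
  by (rule lz_exec_step) simp

bundle lz_exec = lz_prog_nth [simp] loop_heads_def [simp]


section \<open>Correctness of the three loops\<close>

context
  includes lz_exec
begin

lemma compare_loop:
  fixes s :: "'a list"
  assumes "pc c = 21" "regs c 0 = length s" "regs c 1 = t" "regs c 2 = i" "regs c 3 = l"
    "regs_bounded s (regs c)" "1 \<le> i" "i < t" "t \<le> length s" "l \<le> Lval s t i"
  shows "lz_reaches s c (\<lambda>c'. pc c' = 32 \<and> regs c' 3 = Lval s t i \<and>
     (\<forall>r. r \<noteq> 3 \<and> r \<noteq> 6 \<and> r \<noteq> 7 \<longrightarrow> regs c' r = regs c r) \<and> out c' = out c)"
  using assms
proof (induction "Lval s t i - l" arbitrary: c l rule: less_induct)
  case less
  note hyps = less.prems Lval_le_gap[of s t i] Lval_le_suffix[of s t i]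
  consider (source_exhausted) "t \<le> i + l"
    | (text_exhausted) "i + l < t" "length s < t + l"
    | (mismatch) "i + l < t" "t + l \<le> length s" "s ! (i + l - 1) \<noteq> s ! (t + l - 1)"
    | (match) "i + l < t" "t + l \<le> length s" "s ! (i + l - 1) = s ! (t + l - 1)"
    by linarith
  then show ?case
  proof cases
    case source_exhausted
    then have "l = Lval s t i" using hyps by linarith
    then show ?thesis
      using source_exhausted hyps
      apply -
      apply (rule lz_exec_step, simp, (rule lz_straight_step, (simp; fail), simp)+)
      by (rule reaches_done) auto
  next
    case text_exhausted
    then have "l = Lval s t i" using hyps by linarith
    then show ?thesis
      using text_exhausted hyps
      apply -
      apply (rule lz_exec_step, simp, (rule lz_straight_step, (simp; fail), simp)+)
      by (rule reaches_done) auto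
  next
    case mismatch
    then have "l = Lval s t i" using Lval_extend[of l s t i] hyps by simp
    then show ?thesis
      using mismatch hyps
      apply -
      apply (rule lz_exec_step, simp, (rule lz_straight_step, (simp; fail), simp)+)
      by (rule reaches_done) auto
  next
    case match
    then have "l < Lval s t i" using Lval_extend[of l s t i] hyps by simp
    then show ?thesis
      using match hyps
      apply -
      apply (rule lz_exec_step, simp, (rule lz_straight_step, (simp; fail), simp)+)
      apply (rule reaches_mono, rule less.hyps[of "Suc l"])
      by auto
  qed
qed

lemma scan_loop:
  fixes s :: "'a list"
  assumes "pc c = 11" "regs c 0 = length s" "regs c 1 = t" "regs c 2 = i" "regs c 9 = 1" "regs c 10 = 0"
    "regs_bounded s (regs c)" "1 \<le> i" "i \<le> t" "t \<le> length s"
    "regs c 4 = best_before s t i" "leftmost_best s t i (best_before s t i) (regs c 5)"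
  shows "lz_reaches s c (\<lambda>c'. pc c' = 11 \<and> regs c' 0 = length s \<and> regs c' 1 = t \<and> regs c' 2 = t
     \<and> regs c' 9 = 1 \<and> regs c' 10 = 0 \<and> regs c' 4 = best_before s t t
     \<and> leftmost_best s t t (best_before s t t) (regs c' 5) \<and> out c' = out c)"
    (is "lz_reaches s c (?done c)")
  using assms
proof (induction "t - i" arbitrary: c i rule: less_induct)
  case less
  note hyps = less.prems
  show ?case
  proof (cases "i < t")
    case False
    then show ?thesis using hyps by (intro reaches_done) auto
  next
    case True
    let ?L = "Lval s t i"
    have enter: "lz_reaches s c (\<lambda>c1. pc c1 = 21 \<and> regs c1 = (regs c)(3 := 0) \<and> out c1 = out c)"
      using True hyps
      apply -
      apply (rule lz_exec_step, simp, (rule lz_straight_step, (simp; fail), simp)+)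
      by (rule reaches_done) auto
    have compared: "lz_reaches s c1 (\<lambda>c2. pc c2 = 32 \<and> regs c2 3 = ?L
        \<and> (\<forall>r. r \<noteq> 3 \<and> r \<noteq> 6 \<and> r \<noteq> 7 \<longrightarrow> regs c2 r = regs c r) \<and> out c2 = out c)"
      if "pc c1 = 21" "regs c1 = (regs c)(3 := 0)" "out c1 = out c" "regs_bounded s (regs c1)" for c1
      using compare_loop[of c1 s t i 0] that True hyps by (auto elim!: reaches_mono)
    have next_candidate: "lz_reaches s c2 (?done c)"
      if "pc c2 = 32" "regs c2 3 = ?L" "\<forall>r. r \<noteq> 3 \<and> r \<noteq> 6 \<and> r \<noteq> 7 \<longrightarrow> regs c2 r = regs c r"
        "out c2 = out c" "regs_bounded s (regs c2)" for c2
    proof -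
      have "regs c2 0 = length s" "regs c2 1 = t" "regs c2 2 = i" "regs c2 4 = best_before s t i"
        "regs c2 5 = regs c 5" "regs c2 9 = 1" "regs c2 10 = 0"
        using that(3) hyps by simp_all
      note facts = this that(1,2,4,5) True hyps(8,10) Lval_le_suffix[of s t i]
      show ?thesis
      proof (cases "best_before s t i < ?L")
        case True
        then show ?thesis
          using facts leftmost_best_new[of i s t] best_before_Suc[of i s t]
          apply -
          apply (rule lz_exec_step, simp, (rule lz_straight_step, (simp; fail), simp)+)
          apply (rule reaches_mono, rule less.hyps[of "Suc i"])
          by auto
      next
        case False
        then show ?thesis
          using facts best_before_Suc[of i s t] leftmost_best_keep[OF hyps(12)]
          apply -
          apply (rule lz_exec_step, simp, (rule lz_straight_step, (simp; fail), simp)+)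
          apply (rule reaches_mono, rule less.hyps[of "Suc i"])
          by auto
      qed
    qed
    show ?thesis
    proof (rule reaches_trans[OF enter], elim conjE)
      fix c1 :: "'a config"
      assume "pc c1 = 21" "regs c1 = (regs c)(3 := 0)" "out c1 = out c" "regs_bounded s (regs c1)"
      from compared[OF this] show "lz_reaches s c1 (?done c)"
        by (rule reaches_trans) (use next_candidate in blast)
    qed
  qed
qed

lemma parse_loop:
  fixes s :: "'a list"
  assumes "pc c = 2" "regs c 0 = length s" "regs c 1 = t" "regs c 9 = 1" "regs c 10 = 0"
    "regs_bounded s (regs c)" "1 \<le> t" "t \<le> Suc (length s)"
  shows "lz_reaches s c (\<lambda>c'. pc c' = 38 \<and> out c' = out c @ lz_from s t)"
  using assms
proof (induction "Suc (length s) - t" arbitrary: c t rule: less_induct)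
  case less
  note hyps = less.prems
  consider (finished) "length s < t" | (first) "t = 1" "1 \<le> length s" | (later) "2 \<le> t" "t \<le> length s"
    using hyps by fastforce
  then show ?case
  proof cases
    case finished
    then show ?thesis
      using hyps lz_from_end[of s t]
      apply -
      apply (rule lz_exec_step, simp)
      by (rule reaches_done) auto
  next
    case first
    then have "s \<noteq> []" by auto
    then show ?thesis
      using first hyps lz_from_first[of s]
      apply -
      apply (rule lz_exec_step, simp, (rule lz_straight_step, (simp; fail), simp)+)
      apply (rule reaches_mono, rule less.hyps[of 2])
      by auto
  next
    case later
    have enter: "lz_reaches s c (\<lambda>c1. pc c1 = 11 \<and> regs c1 = (regs c)(4 := 0, 5 := 0, 2 := 1)
        \<and> out c1 = out c)"
      using later hyps
      apply -
      apply (rule lz_exec_step, simp, (rule lz_straight_step, (simp; fail), simp)+)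
      by (rule reaches_done) auto
    have scanned: "lz_reaches s c1 (\<lambda>c2. pc c2 = 11 \<and> regs c2 0 = length s \<and> regs c2 1 = t
        \<and> regs c2 2 = t \<and> regs c2 9 = 1 \<and> regs c2 10 = 0 \<and> regs c2 4 = maxL s t
        \<and> leftmost_best s t t (maxL s t) (regs c2 5) \<and> out c2 = out c)"
      if "pc c1 = 11" "regs c1 = (regs c)(4 := 0, 5 := 0, 2 := 1)" "out c1 = out c"
        "regs_bounded s (regs c1)" for c1
      using scan_loop[of c1 s t 1] that later hyps
      by (simp add: best_before_1 leftmost_best_0 best_before_maxL)
    have emit: "lz_reaches s c2 (\<lambda>c'. pc c' = 38 \<and> out c' = out c @ lz_from s t)"
      if "pc c2 = 11" "regs c2 0 = length s" "regs c2 1 = t" "regs c2 2 = t" "regs c2 9 = 1"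
        "regs c2 10 = 0" "regs c2 4 = maxL s t" "leftmost_best s t t (maxL s t) (regs c2 5)"
        "out c2 = out c" "regs_bounded s (regs c2)" for c2
    proof (cases "1 < maxL s t")
      case True
      then have "lz_from s t = Copy (regs c2 5) (maxL s t) # lz_from s (t + maxL s t)"
        using lz_from_copy[of t s] argL_leftmost[OF that(8)] later by simp
      then show ?thesis
        using True that later maxL_le_suffix[of t s]
        apply -
        apply (rule lz_exec_step, simp, (rule lz_straight_step, (simp; fail), simp)+)
        apply (rule reaches_mono, rule less.hyps[of "t + maxL s t"])
        by auto
    next
      case False
      then have "lz_from s t = Lit (s ! (t - 1)) # lz_from s (Suc t)"
        using lz_from_lit[of t s] later by simp
      then show ?thesis
        using False that later
        apply -
        apply (rule lz_exec_step, simp, (rule lz_straight_step, (simp; fail), simp)+)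
        apply (rule reaches_mono, rule less.hyps[of "Suc t"])
        by auto
    qed
    show ?thesis
    proof (rule reaches_trans[OF enter], elim conjE)
      fix c1 :: "'a config"
      assume "pc c1 = 11" "regs c1 = (regs c)(4 := 0, 5 := 0, 2 := 1)" "out c1 = out c"
        "regs_bounded s (regs c1)"
      from scanned[OF this] show "lz_reaches s c1 (\<lambda>c'. pc c' = 38 \<and> out c' = out c @ lz_from s t)"
        by (rule reaches_trans) (use emit in blast)
    qed
  qed
qed

lemma lz_prog_correct:
  fixes s :: "'a list"
  shows "lz_reaches s (init s) (\<lambda>c. halted lz_prog c \<and> out c = lz77 s)"
proof -
  have start: "lz_reaches s (init s) (\<lambda>c. pc c = 2 \<and> regs c 0 = length s \<and> regs c 1 = 1
      \<and> regs c 9 = 1 \<and> regs c 10 = 0 \<and> out c = [])"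
    using regs_bounded_init[of s] unfolding init_def
    apply -
    apply (rule lz_straight_step, (simp; fail), simp)+
    by (rule reaches_done) auto
  show ?thesis
  proof (rule reaches_trans[OF start])
    fix c :: "'a config"
    assume "pc c = 2 \<and> regs c 0 = length s \<and> regs c 1 = 1 \<and> regs c 9 = 1 \<and> regs c 10 = 0
        \<and> out c = []" "regs_bounded s (regs c)"
    then show "lz_reaches s c (\<lambda>c. halted lz_prog c \<and> out c = lz77 s)"
      using parse_loop[of c s 1]
      by (auto elim!: reaches_mono simp: halted_def length_lz_prog lz77_def)
  qed
qed

end


theorem lemma2:
  "\<exists>(P :: instr list) (c :: nat). \<forall>s :: ('a::finite) list.
     \<exists>T. halted P (run P s T) \<and> out (run P s T) = lz77 s \<and>
         (\<forall>k \<le> T. space P (run P s k) \<le> c * bitlen (length s))"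
proof -
  define K where
    "K = bitlen (length lz_prog) + 2 * nregs lz_prog + ncregs lz_prog * bitlen (card (UNIV :: 'a set))"
  have "\<exists>T. halted lz_prog (run lz_prog s T) \<and> out (run lz_prog s T) = lz77 s \<and>
      (\<forall>k\<le>T. space lz_prog (run lz_prog s k) \<le> K * bitlen (length s))" for s :: "'a list"
  proof -
    obtain T where "halted lz_prog (run lz_prog s T) \<and> out (run lz_prog s T) = lz77 s"
        and "\<forall>k\<le>T. regs_bounded s (regs (run lz_prog s k))"
      using lz_prog_correct by (rule reaches_run)
    then show ?thesis
      unfolding K_def regs_bounded_def by (blast intro: space_log_bound)
  qed
  then show ?thesis by blast
qed

end
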